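(* Let $I$ be a finite set of players. For each $\nu\in I$ let $X_\nu\subset\mathbb{R}^{n_\nu}$, let $\succeq_\nu$ be a binary relation on $\mathbb{R}^n=\prod_{\nu\in I}\mathbb{R}^{n_\nu}$, and let $K_\nu:X_{-\nu}\rightrightarrows X_\nu$ be a set-valued map, where $X_{-\nu}=\prod_{j\neq\nu}X_j$. Set $X=\prod_{\nu\in I}X_\nu$ and $K(x)=\prod_{\nu\in I}K_\nu(x^{-\nu})$ for $x\in X$. Assume that for each $\nu\in I$: (1) $K_\nu$ has non-empty values; (2) $U^s_\nu(x)$ is open for all $x\in\mathbb{R}^n$. Define $N_0:\mathbb{R}^n\rightrightarrows\mathbb{R}^n$ by $N_0(x)=\prod_{\nu\in I}\big(N_\nu(x)\setminus\{0\}\big)$, where $0$ denotes the zero vector of $\mathbb{R}^{n_\nu}$. If $\hat x\in X$ is a solution of the Stampacchia quasivariational inequality problem associated to $N_0$ and $K$, i.e. $\hat x\in K(\hat x)$ and there exists $\hat x^*\in N_0(\hat x)$ with $\langle \hat x^*,y-\hat x\rangle\ge 0$ for all $y\in K(\hat x)$, then $\hat x$ is a generalized Nash equilibrium.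
   Context: Vectors $x\in\mathbb{R}^n$ are written $x=(x^\nu,x^{-\nu})$ with $x^\nu\in\mathbb{R}^{n_\nu}$ and $x^{-\nu}$ the components of the other players. For $w^{-\nu}$, the induced relation on $\mathbb{R}^{n_\nu}$ is $x^\nu\succeq_{\nu,w^{-\nu}}y^\nu$ iff $(x^\nu,w^{-\nu})\succeq_\nu(y^\nu,w^{-\nu})$, and $\succ_{\nu,w^{-\nu}}$ denotes its asymmetric part ($a\succ b$ iff $a\succeq b$ and not $b\succeq a$). For $x\in\mathbb{R}^n$, $U^s_\nu(x)=\{y^\nu\in\mathbb{R}^{n_\nu}: y^\nu\succ_{\nu,x^{-\nu}}x^\nu\}$. For $A\subset\mathbb{R}^m$ and $z\in\mathbb{R}^m$ (no convexity, closedness or membership $z\in A$ required), the normal cone is $\mathscr{N}_A(z)=\{z^*\in\mathbb{R}^m:\langle z^*,y-z\rangle\le 0\ \forall y\in A\}$ if $A\neq\emptyset$ and $\mathscr{N}_A(z)=\mathbb{R}^m$ if $A=\emptyset$. Then $N_\nu(x)=\mathscr{N}_{U^s_\nu(x)}(x^\nu)\subset\mathbb{R}^{n_\nu}$. A point $\hat x\in K(\hat x)$ is a generalized Nash equilibrium if for each $\nu\in I$ there is no $x^\nu\in K_\nu(\hat x^{-\nu})$ with $x^\nu\succ_{\nu,\hat x^{-\nu}}\hat x^\nu$. *)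

theory Defs
  imports "HOL-Analysis.Analysis"
begin

text \<open>Player nu controls a block
x^nu in R^(n nu), encoded as a function nat => real vanishing at all
indices >= n nu. A strategy profile x in R^n is a function 'i => (nat => real)
all of whose blocks are such. The partial profile x^{-nu} is encoded as the
profile with the nu-block replaced by zero, and (y^nu, w^{-nu}) is w(nu := y).\<close>

type_synonym block = "nat \<Rightarrow> real"
type_synonym 'i profile = "'i \<Rightarrow> block"

definition blk :: "nat \<Rightarrow> block set" where
  "blk d = {v. \<forall>k\<ge>d. v k = 0}"

definition Rn :: "('i \<Rightarrow> nat) \<Rightarrow> 'i profile set" where
  "Rn n = {x. \<forall>\<nu>. x \<nu> \<in> blk (n \<nu>)}"

definition inner_blk :: "nat \<Rightarrow> block \<Rightarrow> block \<Rightarrow> real" where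
  "inner_blk d a b = (\<Sum>k<d. a k * b k)"

definition inner_prof :: "('i::finite \<Rightarrow> nat) \<Rightarrow> 'i profile \<Rightarrow> 'i profile \<Rightarrow> real" where
  "inner_prof n a b = (\<Sum>\<nu>\<in>UNIV. inner_blk (n \<nu>) (a \<nu>) (b \<nu>))"

definition minus :: "'i \<Rightarrow> 'i profile \<Rightarrow> 'i profile" where
  "minus \<nu> x = x(\<nu> := (\<lambda>_. 0))"

definition Xminus :: "('i \<Rightarrow> block set) \<Rightarrow> 'i \<Rightarrow> 'i profile set" where
  "Xminus Xs \<nu> = {w. w \<nu> = (\<lambda>_. 0) \<and> (\<forall>j. j \<noteq> \<nu> \<longrightarrow> w j \<in> Xs j)}"

definition Xprod :: "('i \<Rightarrow> block set) \<Rightarrow> 'i profile set" where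
  "Xprod Xs = {x. \<forall>\<nu>. x \<nu> \<in> Xs \<nu>}"

definition Kmap :: "('i \<Rightarrow> 'i profile \<Rightarrow> block set) \<Rightarrow> 'i profile \<Rightarrow> 'i profile set" where
  "Kmap K x = {y. \<forall>\<nu>. y \<nu> \<in> K \<nu> (minus \<nu> x)}"

definition ind_rel :: "('i profile \<Rightarrow> 'i profile \<Rightarrow> bool) \<Rightarrow> 'i \<Rightarrow> 'i profile \<Rightarrow> block \<Rightarrow> block \<Rightarrow> bool" where
  "ind_rel R \<nu> w a b = R (w(\<nu> := a)) (w(\<nu> := b))"

definition ind_strict :: "('i profile \<Rightarrow> 'i profile \<Rightarrow> bool) \<Rightarrow> 'i \<Rightarrow> 'i profile \<Rightarrow> block \<Rightarrow> block \<Rightarrow> bool" where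
  "ind_strict R \<nu> w a b = (ind_rel R \<nu> w a b \<and> \<not> ind_rel R \<nu> w b a)"

definition Us :: "('i \<Rightarrow> nat) \<Rightarrow> ('i \<Rightarrow> 'i profile \<Rightarrow> 'i profile \<Rightarrow> bool) \<Rightarrow> 'i \<Rightarrow> 'i profile \<Rightarrow> block set" where
  "Us n R \<nu> x = {y \<in> blk (n \<nu>). ind_strict (R \<nu>) \<nu> x y (x \<nu>)}"

definition ncone :: "nat \<Rightarrow> block set \<Rightarrow> block \<Rightarrow> block set" where
  "ncone d A z = (if A = {} then blk d
     else {zs \<in> blk d. \<forall>y\<in>A. inner_blk d zs (\<lambda>k. y k - z k) \<le> 0})"

definition Nnu :: "('i \<Rightarrow> nat) \<Rightarrow> ('i \<Rightarrow> 'i profile \<Rightarrow> 'i profile \<Rightarrow> bool) \<Rightarrow> 'i \<Rightarrow> 'i profile \<Rightarrow> block set" where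
  "Nnu n R \<nu> x = ncone (n \<nu>) (Us n R \<nu> x) (x \<nu>)"

definition N0 :: "('i \<Rightarrow> nat) \<Rightarrow> ('i \<Rightarrow> 'i profile \<Rightarrow> 'i profile \<Rightarrow> bool) \<Rightarrow> 'i profile \<Rightarrow> 'i profile set" where
  "N0 n R x = {xs. \<forall>\<nu>. xs \<nu> \<in> Nnu n R \<nu> x - {(\<lambda>_. 0)}}"

definition SQVI_solution :: "('i::finite \<Rightarrow> nat) \<Rightarrow> ('i profile \<Rightarrow> 'i profile set) \<Rightarrow> ('i profile \<Rightarrow> 'i profile set) \<Rightarrow> 'i profile \<Rightarrow> bool" where
  "SQVI_solution n T Kf xh \<longleftrightarrow> xh \<in> Kf xh \<and>
     (\<exists>xs\<in>T xh. \<forall>y\<in>Kf xh. inner_prof n xs (\<lambda>\<nu> k. y \<nu> k - xh \<nu> k) \<ge> 0)"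

definition is_GNE :: "('i \<Rightarrow> 'i profile \<Rightarrow> 'i profile \<Rightarrow> bool) \<Rightarrow> ('i \<Rightarrow> 'i profile \<Rightarrow> block set) \<Rightarrow> 'i profile \<Rightarrow> bool" where
  "is_GNE R K xh \<longleftrightarrow> xh \<in> Kmap K xh \<and>
     (\<forall>\<nu>. \<not> (\<exists>a \<in> K \<nu> (minus \<nu> xh). ind_strict (R \<nu>) \<nu> xh a (xh \<nu>)))"

end

theory Submission
  imports Defs
begin

text \<open>If some player \<nu> had a feasible strict improvement a, then a would lie in the open set
  of strict improvements Us at xh. A nonzero normal vector v to an open set at z points strictly
  away from each of its points: a + t v stays in the set for some t > 0, which forces
  \<langle>v, a - z\<rangle> \<le> -t |v|^2 < 0. Replacing only the \<nu>-block of xh by a is feasible, so the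
  variational inequality gives \<langle>v, a - xh \<nu>\<rangle> \<ge> 0, a contradiction.\<close>

lemma inner_blk_self_pos:
  assumes "v \<in> blk d" "v \<noteq> (\<lambda>_. 0)"
  shows "inner_blk d v v > 0"
proof -
  obtain k where k: "v k \<noteq> 0" using assms(2) by auto
  with assms(1) have "k < d" unfolding blk_def by (auto simp: not_less[symmetric])
  then have "v k * v k \<le> (\<Sum>j<d. v j * v j)"
    by (intro member_le_sum) auto
  moreover have "v k * v k > 0" using k by (metis not_real_square_gt_zero)
  ultimately show ?thesis unfolding inner_blk_def by linarith
qed

lemma inner_blk_add_scaled:
  "inner_blk d v (\<lambda>k. a k + t * v k - z k) = inner_blk d v (\<lambda>k. a k - z k) + t * inner_blk d v v"
proof -
  have "(\<Sum>k<d. v k * (a k + t * v k - z k)) = (\<Sum>k<d. v k * (a k - z k) + t * (v k * v k))"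
    by (intro sum.cong) (auto simp: algebra_simps)
  then show ?thesis unfolding inner_blk_def by (simp add: sum.distrib sum_distrib_left)
qed

lemma openin_blk_ray:
  assumes U: "openin (top_of_set (blk d)) U" and "a \<in> U" and "v \<in> blk d"
  shows "\<exists>t>0. (\<lambda>k. a k + t * v k) \<in> U"
proof -
  obtain S where S: "open S" "U = S \<inter> blk d" using U unfolding openin_open by blast
  define ray where "ray = (\<lambda>t::real. \<lambda>k. a k + t * v k)"
  have "continuous_on UNIV ray" unfolding ray_def
    by (intro continuous_on_coordinatewise_then_product continuous_intros)
  then have "open (ray -` S)" using S(1) by (simp add: open_vimage)
  moreover have "0 \<in> ray -` S" using \<open>a \<in> U\<close> S(2) unfolding ray_def by auto
  ultimately obtain e where "e > 0" "ball 0 e \<subseteq> ray -` S"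
    using open_contains_ball by blast
  then have "ray (e / 2) \<in> S" by (simp add: subset_eq)
  moreover have "ray (e / 2) \<in> blk d" using \<open>a \<in> U\<close> S(2) \<open>v \<in> blk d\<close>
    unfolding ray_def blk_def by auto
  ultimately have "ray (e / 2) \<in> U" using S(2) by blast
  moreover have "e / 2 > 0" using \<open>e > 0\<close> by simp
  ultimately show ?thesis unfolding ray_def by blast
qed

lemma ncone_openin_strict:
  assumes U: "openin (top_of_set (blk d)) U" and "a \<in> U"
    and v: "v \<in> ncone d U z" "v \<noteq> (\<lambda>_. 0)"
  shows "inner_blk d v (\<lambda>k. a k - z k) < 0"
proof -
  have "U \<noteq> {}" using \<open>a \<in> U\<close> by blast
  then have "v \<in> blk d" and normal: "\<And>y. y \<in> U \<Longrightarrow> inner_blk d v (\<lambda>k. y k - z k) \<le> 0"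
    using v(1) unfolding ncone_def by auto
  obtain t where "t > 0" and "(\<lambda>k. a k + t * v k) \<in> U"
    using openin_blk_ray[OF U \<open>a \<in> U\<close> \<open>v \<in> blk d\<close>] by blast
  then have "inner_blk d v (\<lambda>k. a k - z k) + t * inner_blk d v v \<le> 0"
    using normal by (simp only: flip: inner_blk_add_scaled)
  moreover have "t * inner_blk d v v > 0"
    using \<open>t > 0\<close> inner_blk_self_pos[OF \<open>v \<in> blk d\<close> v(2)] by simp
  ultimately show ?thesis by linarith
qed

lemma inner_prof_update_diff:
  "inner_prof n xs (\<lambda>\<mu> k. (x(\<nu> := a)) \<mu> k - x \<mu> k) = inner_blk (n \<nu>) (xs \<nu>) (\<lambda>k. a k - x \<nu> k)"
proof -
  have "inner_prof n xs (\<lambda>\<mu> k. (x(\<nu> := a)) \<mu> k - x \<mu> k)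
      = (\<Sum>\<mu>\<in>UNIV. if \<mu> = \<nu> then inner_blk (n \<nu>) (xs \<nu>) (\<lambda>k. a k - x \<nu> k) else 0)"
    unfolding inner_prof_def by (intro sum.cong) (auto simp: inner_blk_def)
  then show ?thesis by simp
qed

lemma minus_in_Xminus: "x \<in> Xprod Xs \<Longrightarrow> minus \<nu> x \<in> Xminus Xs \<nu>"
  unfolding Xminus_def Xprod_def minus_def by auto

lemma Kmap_update:
  "x \<in> Kmap K x \<Longrightarrow> a \<in> K \<nu> (minus \<nu> x) \<Longrightarrow> x(\<nu> := a) \<in> Kmap K x"
  unfolding Kmap_def by auto

theorem theorem1:
  fixes n :: "'i::finite \<Rightarrow> nat"
    and Xs :: "'i \<Rightarrow> (nat \<Rightarrow> real) set"
    and R :: "'i \<Rightarrow> ('i \<Rightarrow> nat \<Rightarrow> real) \<Rightarrow> ('i \<Rightarrow> nat \<Rightarrow> real) \<Rightarrow> bool"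
    and K :: "'i \<Rightarrow> ('i \<Rightarrow> nat \<Rightarrow> real) \<Rightarrow> (nat \<Rightarrow> real) set"
    and xh :: "'i \<Rightarrow> nat \<Rightarrow> real"
  assumes X_sub: "\<And>\<nu>. Xs \<nu> \<subseteq> blk (n \<nu>)"
    and K_maps: "\<And>\<nu> w. w \<in> Xminus Xs \<nu> \<Longrightarrow> K \<nu> w \<subseteq> Xs \<nu>"
    and K_nonempty: "\<And>\<nu> w. w \<in> Xminus Xs \<nu> \<Longrightarrow> K \<nu> w \<noteq> {}"
    and U_open: "\<And>\<nu> x. x \<in> Rn n \<Longrightarrow> openin (top_of_set (blk (n \<nu>))) (Us n R \<nu> x)"
    and xh_X: "xh \<in> Xprod Xs"
    and sol: "SQVI_solution n (N0 n R) (Kmap K) xh"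
  shows "is_GNE R K xh"
  unfolding is_GNE_def
proof (intro conjI allI notI)
  show xhK: "xh \<in> Kmap K xh" using sol unfolding SQVI_solution_def by blast
  obtain xs where xs: "xs \<in> N0 n R xh"
    and vi: "\<And>y. y \<in> Kmap K xh \<Longrightarrow> inner_prof n xs (\<lambda>\<nu> k. y \<nu> k - xh \<nu> k) \<ge> 0"
    using sol unfolding SQVI_solution_def by blast
  fix \<nu>
  assume "\<exists>a\<in>K \<nu> (minus \<nu> xh). ind_strict (R \<nu>) \<nu> xh a (xh \<nu>)"
  then obtain a where aK: "a \<in> K \<nu> (minus \<nu> xh)" and better: "ind_strict (R \<nu>) \<nu> xh a (xh \<nu>)"
    by blast
  have "a \<in> blk (n \<nu>)" using K_maps[OF minus_in_Xminus[OF xh_X]] aK X_sub by blast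
  with better have aU: "a \<in> Us n R \<nu> xh" unfolding Us_def by simp
  have "xh \<in> Rn n" using xh_X X_sub unfolding Xprod_def Rn_def by blast
  moreover have "xs \<nu> \<in> Nnu n R \<nu> xh" "xs \<nu> \<noteq> (\<lambda>_. 0)" using xs unfolding N0_def by auto
  ultimately have "inner_blk (n \<nu>) (xs \<nu>) (\<lambda>k. a k - xh \<nu> k) < 0"
    using ncone_openin_strict[OF U_open aU] unfolding Nnu_def by blast
  moreover have "inner_blk (n \<nu>) (xs \<nu>) (\<lambda>k. a k - xh \<nu> k) \<ge> 0"
    using vi[OF Kmap_update[OF xhK aK]] by (simp only: inner_prof_update_diff)
  ultimately show False by linarith
qed

end
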